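(* Let $\hat{\mathbf Q}=\tilde{\mathbf Q}_{st}+\tilde{\mathbf Q}_{\mathcal I}\varepsilon$ be a $2\times2$ dual quaternion Hermitian matrix with $\tilde{\mathbf Q}_{st}=\begin{bmatrix} a&\tilde c\\ \tilde c^\ast&b\end{bmatrix}$, $\tilde c\ne0$. Let $\lambda_1,\lambda_2$ be the solutions of $(a-x)(b-x)=\tilde c^\ast\tilde c$, and let $\tilde{\mathbf U}$ be the unitary quaternion matrix $$\tilde{\mathbf U}=\begin{bmatrix}\frac{-\tilde c}{((a-\lambda_1)^2+\tilde c^\ast\tilde c)^{1/2}} & \frac{-\tilde c}{((a-\lambda_2)^2+\tilde c^\ast\tilde c)^{1/2}}\\ \frac{a-\lambda_1}{((a-\lambda_1)^2+\tilde c^\ast\tilde c)^{1/2}} & \frac{a-\lambda_2}{((a-\lambda_2)^2+\tilde c^\ast\tilde c)^{1/2}}\end{bmatrix},$$ which satisfies $\tilde{\mathbf U}^\ast\tilde{\mathbf Q}_{st}\tilde{\mathbf U}=\mathrm{diag}(\lambda_1,\lambda_2)$. Write $\tilde{\mathbf U}^\ast\tilde{\mathbf Q}_{\mathcal I}\tilde{\mathbf U}=\begin{bmatrix}x&\tilde z\\ \tilde z^\ast&y\end{bmatrix}$ and define $$\hat{\mathbf V}=\begin{bmatrix}1&\frac{\tilde z}{\lambda_2-\lambda_1}\varepsilon\\ \frac{\tilde z^\ast}{\lambda_1-\lambda_2}\varepsilon&1\end{bmatrix}.$$ Then $\hat{\mathbf V}^\ast\tilde{\mathbf U}^\ast\hat{\mathbf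 Q}^\ast\tilde{\mathbf U}\hat{\mathbf V}=\mathrm{diag}(\lambda_1+x\varepsilon,\lambda_2+y\varepsilon)$, which is a diagonal dual number matrix, and $\tilde{\mathbf U}\hat{\mathbf V}$ is a unitary dual quaternion matrix.
   Context: Quaternions $q=q_0+q_1\mathbf i+q_2\mathbf j+q_3\mathbf k$ (real $q_i$, Hamilton multiplication), conjugate $q^\ast=q_0-q_1\mathbf i-q_2\mathbf j-q_3\mathbf k$. A dual quaternion is $q_{st}+q_{\mathcal I}\varepsilon$ with quaternions $q_{st},q_{\mathcal I}$, where $\varepsilon$ commutes with quaternions, $\varepsilon\ne0$, $\varepsilon^2=0$; multiplication $(p_{st}+p_{\mathcal I}\varepsilon)(q_{st}+q_{\mathcal I}\varepsilon)=p_{st}q_{st}+(p_{st}q_{\mathcal I}+p_{\mathcal I}q_{st})\varepsilon$; conjugate $q_{st}^\ast+q_{\mathcal I}^\ast\varepsilon$. Dual numbers are dual quaternions with real standard and dual parts. A dual quaternion matrix is Hermitian if it equals its conjugate transpose and unitary if $\hat{\mathbf U}^\ast\hat{\mathbf U}=\hat{\mathbf U}\hat{\mathbf U}^\ast=\hat{\mathbf I}$. *)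

theory Defs
  imports "HOL-Analysis.Analysis"
begin

codatatype quat = Quat (Re: real) (Im1: real) (Im2: real) (Im3: real)

lemma quat_eqI [intro?]:
  "\<lbrakk>Re x = Re y; Im1 x = Im1 y; Im2 x = Im2 y; Im3 x = Im3 y\<rbrakk> \<Longrightarrow> x = y"
  by (rule quat.expand) simp

lemma quat_eq_iff: "x = y \<longleftrightarrow> Re x = Re y \<and> Im1 x = Im1 y \<and> Im2 x = Im2 y \<and> Im3 x = Im3 y"
  by (auto intro: quat.expand)

instantiation quat :: real_vector
begin

primcorec zero_quat where
  "Re 0 = 0" | "Im1 0 = 0" | "Im2 0 = 0" | "Im3 0 = 0"

primcorec plus_quat where
  "Re (x + y) = Re x + Re y" | "Im1 (x + y) = Im1 x + Im1 y"
| "Im2 (x + y) = Im2 x + Im2 y" | "Im3 (x + y) = Im3 x + Im3 y"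

primcorec uminus_quat where
  "Re (- x) = - Re x" | "Im1 (- x) = - Im1 x" | "Im2 (- x) = - Im2 x" | "Im3 (- x) = - Im3 x"

primcorec minus_quat where
  "Re (x - y) = Re x - Re y" | "Im1 (x - y) = Im1 x - Im1 y"
| "Im2 (x - y) = Im2 x - Im2 y" | "Im3 (x - y) = Im3 x - Im3 y"

primcorec scaleR_quat where
  "Re (scaleR r x) = r * Re x" | "Im1 (scaleR r x) = r * Im1 x"
| "Im2 (scaleR r x) = r * Im2 x" | "Im3 (scaleR r x) = r * Im3 x"

instance
  by standard (auto simp: quat_eq_iff algebra_simps)

end

instantiation quat :: real_algebra_1
begin

primcorec one_quat where
  "Re 1 = 1" | "Im1 1 = 0" | "Im2 1 = 0" | "Im3 1 = 0"

primcorec times_quat where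
  "Re (x * y) = Re x * Re y - Im1 x * Im1 y - Im2 x * Im2 y - Im3 x * Im3 y"
| "Im1 (x * y) = Re x * Im1 y + Im1 x * Re y + Im2 x * Im3 y - Im3 x * Im2 y"
| "Im2 (x * y) = Re x * Im2 y - Im1 x * Im3 y + Im2 x * Re y + Im3 x * Im1 y"
| "Im3 (x * y) = Re x * Im3 y + Im1 x * Im2 y - Im2 x * Im1 y + Im3 x * Re y"

instance
  by standard (auto simp: quat_eq_iff algebra_simps)

end

primcorec qcnj :: "quat \<Rightarrow> quat" where
  "Re (qcnj x) = Re x" | "Im1 (qcnj x) = - Im1 x" | "Im2 (qcnj x) = - Im2 x" | "Im3 (qcnj x) = - Im3 x"

text \<open>A dual quaternion \<open>q_st + q_I \<epsilon>\<close> is represented by the pair of its standard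
  part \<open>dst\<close> and its infinitesimal (dual) part \<open>dinf\<close>.\<close>
datatype dquat = DQ (dst: quat) (dinf: quat)

lemma dquat_eq_iff: "p = q \<longleftrightarrow> dst p = dst q \<and> dinf p = dinf q"
  by (cases p; cases q) auto

instantiation dquat :: ring_1
begin

definition "0 = DQ 0 0"
definition "1 = DQ 1 0"
definition "p + q = DQ (dst p + dst q) (dinf p + dinf q)"
definition "- p = DQ (- dst p) (- dinf p)"
definition "p - q = DQ (dst p - dst q) (dinf p - dinf q)"
definition "p * q = DQ (dst p * dst q) (dst p * dinf q + dinf p * dst q)"

instance
  by standard (auto simp: dquat_eq_iff zero_dquat_def one_dquat_def plus_dquat_def
      uminus_dquat_def minus_dquat_def times_dquat_def algebra_simps)

end

definition eps :: dquat where "eps = DQ 0 1"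

definition dq_of :: "quat \<Rightarrow> dquat" where "dq_of q = DQ q 0"

definition dcnj :: "dquat \<Rightarrow> dquat" where "dcnj p = DQ (qcnj (dst p)) (qcnj (dinf p))"

definition dual_number :: "dquat \<Rightarrow> bool" where
  "dual_number p \<longleftrightarrow> dst p \<in> range of_real \<and> dinf p \<in> range of_real"

definition mat2 :: "'a \<Rightarrow> 'a \<Rightarrow> 'a \<Rightarrow> 'a \<Rightarrow> 'a ^ 2 ^ 2" where
  "mat2 p q r s = (\<chi> i j. if i = 1 then (if j = 1 then p else q) else (if j = 1 then r else s))"

definition qct :: "quat ^ 'n ^ 'm \<Rightarrow> quat ^ 'm ^ 'n" where
  "qct A = (\<chi> i j. qcnj (A $ j $ i))"

definition dct :: "dquat ^ 'n ^ 'm \<Rightarrow> dquat ^ 'm ^ 'n" where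
  "dct A = (\<chi> i j. dcnj (A $ j $ i))"

definition dq_mat :: "quat ^ 'n ^ 'm \<Rightarrow> dquat ^ 'n ^ 'm" where
  "dq_mat A = (\<chi> i j. dq_of (A $ i $ j))"

definition st_mat :: "dquat ^ 'n ^ 'm \<Rightarrow> quat ^ 'n ^ 'm" where
  "st_mat A = (\<chi> i j. dst (A $ i $ j))"

definition inf_mat :: "dquat ^ 'n ^ 'm \<Rightarrow> quat ^ 'n ^ 'm" where
  "inf_mat A = (\<chi> i j. dinf (A $ i $ j))"

definition dq_hermitian :: "dquat ^ 'n ^ 'n \<Rightarrow> bool" where
  "dq_hermitian A \<longleftrightarrow> dct A = A"

definition q_unitary :: "quat ^ 'n ^ 'n \<Rightarrow> bool" where
  "q_unitary U \<longleftrightarrow> qct U ** U = mat 1 \<and> U ** qct U = mat 1"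

definition dq_unitary :: "dquat ^ 'n ^ 'n \<Rightarrow> bool" where
  "dq_unitary U \<longleftrightarrow> dct U ** U = mat 1 \<and> U ** dct U = mat 1"

definition dn_diagonal :: "dquat ^ 'n ^ 'n \<Rightarrow> bool" where
  "dn_diagonal A \<longleftrightarrow> (\<forall>i j. i \<noteq> j \<longrightarrow> A $ i $ j = 0) \<and> (\<forall>i j. dual_number (A $ i $ j))"

end

theory Submission
  imports Defs
begin

(*
  Let n = |c| and u = -c/n.  Conjugation by diag(u, 1) turns the standard part into the real
  symmetric matrix [[a, -n], [-n, b]], whose eigenvectors (n, a - l_i)/s_i are the columns of a
  real orthogonal matrix R; so U = diag(u, 1) R is unitary and diagonalizes the standard part.
  For the dual part write V = I + E eps.  Because eps^2 = 0, conjugating Q by U V gives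
  diag(l1, l2) + (W + E^* diag(l1, l2) + diag(l1, l2) E) eps, and since l1 <> l2 a
  skew-Hermitian E cancels the off-diagonal entries of W; a skew-Hermitian E also makes
  I + E eps unitary.
*)

lemma qcnj_mult [simp]: "qcnj (p * q) = qcnj q * qcnj p"
  and qcnj_add [simp]: "qcnj (p + q) = qcnj p + qcnj q"
  and qcnj_uminus [simp]: "qcnj (- p) = - qcnj p"
  and qcnj_scaleR [simp]: "qcnj (r *\<^sub>R p) = r *\<^sub>R qcnj p"
  and qcnj_of_real [simp]: "qcnj (of_real r) = of_real r"
  and qcnj_qcnj [simp]: "qcnj (qcnj p) = p"
  and qcnj_zero [simp]: "qcnj 0 = 0"
  and qcnj_one [simp]: "qcnj 1 = 1"
  by (simp_all add: quat_eq_iff of_real_def)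

lemma Re_of_real [simp]: "Re (of_real r) = r"
  by (simp add: of_real_def)

lemma qcnj_sum: "qcnj (sum f S) = (\<Sum>i\<in>S. qcnj (f i))"
  by (induction S rule: infinite_finite_induct) auto

lemma qcnj_mult_self: "qcnj q * q = of_real (Re (qcnj q * q))"
  and mult_qcnj_self: "q * qcnj q = qcnj q * q"
  by (simp_all add: quat_eq_iff of_real_def algebra_simps)

lemma Re_qcnj_mult_self_pos:
  assumes "q \<noteq> 0"
  shows "0 < Re (qcnj q * q)"
proof -
  have "Re q \<noteq> 0 \<or> Im1 q \<noteq> 0 \<or> Im2 q \<noteq> 0 \<or> Im3 q \<noteq> 0"
    using assms by (auto simp: quat_eq_iff)
  then show ?thesis
    by (auto simp: add_pos_nonneg add_nonneg_pos simp flip: power2_eq_square)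
qed

lemma qcnj_eq_self_iff: "qcnj q = q \<longleftrightarrow> q \<in> range of_real"
  by (auto simp: quat_eq_iff of_real_def)

lemma mult_of_real_right: "q * of_real r = r *\<^sub>R (q :: quat)"
  by (simp add: quat_eq_iff of_real_def algebra_simps)

lemma matrix_add_rdistrib: "(A + B) ** C = A ** C + B ** C"
  by (vector matrix_matrix_mult_def sum.distrib[symmetric] distrib_right)

lemma matrix_mul_uminus_left [simp]: "- A ** B = - (A ** B)"
  and matrix_mul_uminus_right [simp]: "A ** - B = - (A ** B)"
  for A :: "'a::ring_1 ^ 'n ^ 'm" and B :: "'a ^ 'p ^ 'n"
  by (simp_all add: matrix_matrix_mult_def vec_eq_iff sum_negf)

lemma mat2_eq_iff:
  "mat2 p q r s = mat2 p' q' r' s' \<longleftrightarrow> p = p' \<and> q = q' \<and> r = r' \<and> s = s'"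
  unfolding mat2_def by (auto simp: vec_eq_iff forall_2)

lemma mat2_nth [simp]:
  "mat2 p q r s $ 1 $ 1 = p" "mat2 p q r s $ 1 $ 2 = q"
  "mat2 p q r s $ 2 $ 1 = r" "mat2 p q r s $ 2 $ 2 = s"
  unfolding mat2_def by auto

lemma mat2_expand: "A = mat2 (A $ 1 $ 1) (A $ 1 $ 2) (A $ 2 $ 1) (A $ 2 $ 2)"
  unfolding mat2_def by (auto simp: vec_eq_iff forall_2)

lemma mat2_add: "mat2 p q r s + mat2 p' q' r' s' = mat2 (p + p') (q + q') (r + r') (s + s')"
  by (simp add: mat2_def vec_eq_iff)

lemma mat2_uminus: "- mat2 p q r s = mat2 (- p) (- q) (- r) (- s)"
  by (simp add: mat2_def vec_eq_iff)

lemma mat2_mult: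
  "mat2 p q r s ** mat2 p' q' r' s' =
     mat2 (p * p' + q * r') (p * q' + q * s') (r * p' + s * r') (r * q' + s * s')"
  by (subst mat2_expand) (simp add: matrix_matrix_mult_def sum_2)

lemma mat_one_mat2: "(mat 1 :: 'a::{zero,one}^2^2) = mat2 1 0 0 1"
  by (subst mat2_expand) (simp add: mat_def)

lemma transpose_mat2: "transpose (mat2 p q r s) = mat2 p r q s"
  by (subst mat2_expand) (simp add: transpose_def)

lemma qct_mat2: "qct (mat2 p q r s) = mat2 (qcnj p) (qcnj r) (qcnj q) (qcnj s)"
  by (subst mat2_expand) (simp add: qct_def)

lemma qct_mult: "qct (A ** B) = qct B ** qct A"
  by (simp add: qct_def matrix_matrix_mult_def vec_eq_iff qcnj_sum)

lemma qct_qct [simp]: "qct (qct A) = A"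
  and qct_zero [simp]: "qct 0 = 0"
  and qct_mat_one [simp]: "qct (mat 1) = mat 1"
  by (simp_all add: qct_def mat_def vec_eq_iff)

lemma qct_eq_self_mat2:
  assumes "qct W = W"
  shows "W = mat2 (W $ 1 $ 1) (W $ 1 $ 2) (qcnj (W $ 1 $ 2)) (W $ 2 $ 2)"
    and "W $ 1 $ 1 \<in> range of_real" "W $ 2 $ 2 \<in> range of_real"
proof -
  have W: "qcnj (W $ j $ i) = W $ i $ j" for i j
    using arg_cong[OF assms, of "\<lambda>A. A $ i $ j"] by (simp add: qct_def)
  then show "W = mat2 (W $ 1 $ 1) (W $ 1 $ 2) (qcnj (W $ 1 $ 2)) (W $ 2 $ 2)"
    by (simp flip: mat2_expand)
  show "W $ 1 $ 1 \<in> range of_real" "W $ 2 $ 2 \<in> range of_real"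
    using W by (simp_all flip: qcnj_eq_self_iff)
qed

lemma q_unitary_mult:
  assumes "q_unitary U" "q_unitary V"
  shows "q_unitary (U ** V)"
proof -
  have "qct V ** (qct U ** U) ** V = mat 1" "U ** (V ** qct V) ** qct U = mat 1"
    using assms by (simp_all add: q_unitary_def)
  then show ?thesis
    by (simp add: q_unitary_def qct_mult matrix_mul_assoc)
qed

lemma q_unitary_mat2_phase:
  assumes "qcnj u * u = 1"
  shows "q_unitary (mat2 u 0 0 1)"
  using assms mult_qcnj_self[of u]
  by (simp add: q_unitary_def qct_mat2 mat2_mult mat_one_mat2)

definition of_real_mat :: "real ^ 'n ^ 'm \<Rightarrow> 'a::real_algebra_1 ^ 'n ^ 'm" where
  "of_real_mat A = (\<chi> i j. of_real (A $ i $ j))"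

lemma of_real_mat_mult: "of_real_mat (A ** B) = of_real_mat A ** of_real_mat B"
  by (simp add: of_real_mat_def matrix_matrix_mult_def vec_eq_iff)

lemma of_real_mat_mat2:
  "of_real_mat (mat2 p q r s) = mat2 (of_real p) (of_real q) (of_real r) (of_real s)"
  by (subst mat2_expand) (simp add: of_real_mat_def)

lemma of_real_mat_one: "of_real_mat (mat 1) = mat 1"
  by (simp add: of_real_mat_def mat_def vec_eq_iff)

lemma qct_of_real_mat: "qct (of_real_mat A) = of_real_mat (transpose A)"
  by (simp add: qct_def of_real_mat_def transpose_def)

lemma q_unitary_of_real_mat:
  assumes "orthogonal_matrix R"
  shows "q_unitary (of_real_mat R)"
  using assms
  by (simp add: orthogonal_matrix_def q_unitary_def qct_of_real_mat flip: of_real_mat_mult)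
    (simp add: of_real_mat_one)

lemma orthogonal_matrix_diagonalizes:
  assumes "orthogonal_matrix R" and "S ** R = R ** L"
  shows "transpose R ** S ** R = L"
proof -
  have "transpose R ** S ** R = transpose R ** (R ** L)"
    using assms(2) by (simp flip: matrix_mul_assoc)
  also have "\<dots> = L"
    using assms(1) by (simp add: orthogonal_matrix_def matrix_mul_assoc)
  finally show ?thesis .
qed

lemma distinct_roots_shifted_product:
  fixes a b l1 l2 :: "'a::idom"
  assumes "(a - l1) * (b - l1) = N" "(a - l2) * (b - l2) = N" "l1 \<noteq> l2"
  shows "(a - l1) * (a - l2) = - N"
proof -
  have "(l2 - l1) * (a + b - l1 - l2) = (a - l1) * (b - l1) - (a - l2) * (b - l2)"
    by (simp add: algebra_simps)
  then have "a + b - l1 - l2 = 0"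
    using assms by simp
  moreover have "(a - l1) * (a - l2) = - ((a - l1) * (b - l1)) + (a - l1) * (a + b - l1 - l2)"
    by (simp add: algebra_simps)
  ultimately show ?thesis
    using assms(1) by simp
qed

lemma orthogonal_matrix_mat2_normalized_columns:
  fixes n d1 d2 :: real
  assumes "n \<noteq> 0" "d1 * d2 = - n\<^sup>2"
  defines "s1 \<equiv> sqrt (d1\<^sup>2 + n\<^sup>2)" and "s2 \<equiv> sqrt (d2\<^sup>2 + n\<^sup>2)"
  shows "orthogonal_matrix (mat2 (n / s1) (n / s2) (d1 / s1) (d2 / s2))"
proof -
  have unit: "n / s * (n / s) + d / s * (d / s) = 1" if s: "s = sqrt (d\<^sup>2 + n\<^sup>2)" for s d
  proof -
    have "n / s * (n / s) + d / s * (d / s) = (d\<^sup>2 + n\<^sup>2) / s\<^sup>2"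
      by (simp add: power2_eq_square add_divide_distrib)
    then show ?thesis
      using s assms(1) by simp
  qed
  have "n / s1 * (n / s2) + d1 / s1 * (d2 / s2) = 0"
    using assms(2) by (simp add: field_simps power2_eq_square)
  with unit[OF s1_def[THEN meta_eq_to_obj_eq]] unit[OF s2_def[THEN meta_eq_to_obj_eq]] show ?thesis
    by (simp add: orthogonal_matrix transpose_mat2 mat2_mult mat_one_mat2 mat2_eq_iff mult.commute)
qed

lemma mat2_eigenvectors:
  fixes a b n l1 l2 s1 s2 :: real
  assumes "(a - l1) * (b - l1) = n\<^sup>2" "(a - l2) * (b - l2) = n\<^sup>2"
  defines "R \<equiv> mat2 (n / s1) (n / s2) ((a - l1) / s1) ((a - l2) / s2)"
  shows "mat2 a (- n) (- n) b ** R = R ** mat2 l1 0 0 l2"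
  using assms
  by (simp add: mat2_mult mat2_eq_iff flip: add_divide_distrib diff_divide_distrib)
    (simp add: algebra_simps power2_eq_square)

lemma real_symmetric_mat2_diagonalization:
  fixes a b n l1 l2 :: real
  assumes "n \<noteq> 0" "l1 \<noteq> l2" "(a - l1) * (b - l1) = n\<^sup>2" "(a - l2) * (b - l2) = n\<^sup>2"
  defines "s1 \<equiv> sqrt ((a - l1)\<^sup>2 + n\<^sup>2)" and "s2 \<equiv> sqrt ((a - l2)\<^sup>2 + n\<^sup>2)"
  defines "R \<equiv> mat2 (n / s1) (n / s2) ((a - l1) / s1) ((a - l2) / s2)"
  shows "orthogonal_matrix R" "transpose R ** mat2 a (- n) (- n) b ** R = mat2 l1 0 0 l2"
proof -
  show "orthogonal_matrix R"
    unfolding R_def s1_def s2_def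
    using assms(1) distinct_roots_shifted_product[OF assms(3,4,2)]
    by (rule orthogonal_matrix_mat2_normalized_columns)
  then show "transpose R ** mat2 a (- n) (- n) b ** R = mat2 l1 0 0 l2"
    using mat2_eigenvectors[OF assms(3,4)] unfolding R_def
    by (rule orthogonal_matrix_diagonalizes)
qed

lemma mat2_phase_congruence:
  fixes c :: quat and a b :: real
  assumes "c \<noteq> 0"
  defines "n \<equiv> sqrt (Re (qcnj c * c))"
  defines "u \<equiv> - ((1 / n) *\<^sub>R c)"
  shows "qcnj u * u = 1"
    and "qct (mat2 u 0 0 1) ** mat2 (of_real a) c (qcnj c) (of_real b) ** mat2 u 0 0 1
           = of_real_mat (mat2 a (- n) (- n) b)"
proof -
  define N where "N = Re (qcnj c * c)"
  have "0 < N" "qcnj c * c = of_real N"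
    unfolding N_def by (rule Re_qcnj_mult_self_pos[OF assms(1)], rule qcnj_mult_self)
  moreover have "n = sqrt N"
    unfolding n_def N_def ..
  ultimately have "0 < n" and cc: "qcnj c * c = of_real (n * n)"
    by simp_all
  then show uu: "qcnj u * u = 1"
    by (simp add: u_def of_real_def)
  have "qcnj u * c = of_real (- n)" "qcnj c * u = of_real (- n)"
    using cc \<open>0 < n\<close> by (simp_all add: u_def of_real_def)
  moreover have "qcnj u * of_real a * u = a *\<^sub>R (qcnj u * u)"
    by (simp add: mult_of_real_right)
  ultimately show "qct (mat2 u 0 0 1) ** mat2 (of_real a) c (qcnj c) (of_real b) ** mat2 u 0 0 1
      = of_real_mat (mat2 a (- n) (- n) b)"
    using uu by (simp add: qct_mat2 mat2_mult of_real_mat_mat2 scaleR_conv_of_real)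
qed

lemma quat_hermitian_mat2_diagonalization:
  fixes a b l1 l2 :: real and c :: quat
  assumes "c \<noteq> 0" "l1 \<noteq> l2"
    and "(a - l1) * (b - l1) = Re (qcnj c * c)" "(a - l2) * (b - l2) = Re (qcnj c * c)"
  defines "s1 \<equiv> sqrt ((a - l1)\<^sup>2 + Re (qcnj c * c))"
    and "s2 \<equiv> sqrt ((a - l2)\<^sup>2 + Re (qcnj c * c))"
  defines "U \<equiv> mat2 ((1 / s1) *\<^sub>R (- c)) ((1 / s2) *\<^sub>R (- c))
                    (of_real ((a - l1) / s1)) (of_real ((a - l2) / s2))"
  shows "q_unitary U"
    and "qct U ** mat2 (of_real a) c (qcnj c) (of_real b) ** U = mat2 (of_real l1) 0 0 (of_real l2)"
proof -
  define N where "N = Re (qcnj c * c)"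
  define n where "n = sqrt N"
  define u where "u = - ((1 / n) *\<^sub>R c)"
  define R where "R = mat2 (n / s1) (n / s2) ((a - l1) / s1) ((a - l2) / s2)"
  have "0 < N"
    unfolding N_def by (rule Re_qcnj_mult_self_pos[OF assms(1)])
  then have "n \<noteq> 0" and n2: "n\<^sup>2 = N"
    by (simp_all add: n_def)
  have R: "orthogonal_matrix R" "transpose R ** mat2 a (- n) (- n) b ** R = mat2 l1 0 0 l2"
    using real_symmetric_mat2_diagonalization[OF \<open>n \<noteq> 0\<close> assms(2)] assms(3,4) n2
    by (simp_all add: R_def s1_def s2_def N_def)
  have phase: "qcnj u * u = 1"
    "qct (mat2 u 0 0 1) ** mat2 (of_real a) c (qcnj c) (of_real b) ** mat2 u 0 0 1
       = of_real_mat (mat2 a (- n) (- n) b)"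
    using mat2_phase_congruence[OF assms(1)] by (simp_all add: u_def n_def N_def)
  have U: "U = mat2 u 0 0 1 ** of_real_mat R"
    using \<open>n \<noteq> 0\<close> by (simp add: U_def u_def R_def of_real_mat_mat2 mat2_mult of_real_def)
  show "q_unitary U"
    unfolding U by (intro q_unitary_mult q_unitary_mat2_phase q_unitary_of_real_mat phase(1) R(1))
  have "qct U ** mat2 (of_real a) c (qcnj c) (of_real b) ** U
      = qct (of_real_mat R)
          ** (qct (mat2 u 0 0 1) ** mat2 (of_real a) c (qcnj c) (of_real b) ** mat2 u 0 0 1)
          ** of_real_mat R"
    by (simp add: U qct_mult matrix_mul_assoc)
  also have "\<dots> = of_real_mat (transpose R ** mat2 a (- n) (- n) b ** R)"
    by (simp add: phase(2) qct_of_real_mat of_real_mat_mult)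
  finally show "qct U ** mat2 (of_real a) c (qcnj c) (of_real b) ** U
      = mat2 (of_real l1) 0 0 (of_real l2)"
    by (simp add: R(2) of_real_mat_mat2)
qed

definition dual_mat :: "quat ^ 'n ^ 'm \<Rightarrow> quat ^ 'n ^ 'm \<Rightarrow> dquat ^ 'n ^ 'm" where
  "dual_mat A B = (\<chi> i j. DQ (A $ i $ j) (B $ i $ j))"

lemma dst_sum: "dst (sum f S) = (\<Sum>i\<in>S. dst (f i))"
  and dinf_sum: "dinf (sum f S) = (\<Sum>i\<in>S. dinf (f i))"
  by (induction S rule: infinite_finite_induct) (simp_all add: zero_dquat_def plus_dquat_def)

lemma dual_mat_mult: "dual_mat A B ** dual_mat C D = dual_mat (A ** C) (A ** D + B ** C)"
  by (simp add: dual_mat_def matrix_matrix_mult_def vec_eq_iff dquat_eq_iff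
      dst_sum dinf_sum times_dquat_def sum.distrib)

lemma dual_mat_eq_iff: "dual_mat A B = dual_mat C D \<longleftrightarrow> A = C \<and> B = D"
  by (auto simp: dual_mat_def vec_eq_iff)

lemma dct_dual_mat: "dct (dual_mat A B) = dual_mat (qct A) (qct B)"
  by (simp add: dual_mat_def dct_def qct_def dcnj_def)

lemma dq_mat_eq_dual_mat: "dq_mat A = dual_mat A 0"
  by (simp add: dual_mat_def dq_mat_def dq_of_def)

lemma dual_mat_st_inf: "dual_mat (st_mat A) (inf_mat A) = A"
  by (simp add: dual_mat_def st_mat_def inf_mat_def vec_eq_iff dquat_eq_iff)

lemma dual_mat_one: "dual_mat (mat 1) 0 = mat 1"
  by (simp add: dual_mat_def mat_def vec_eq_iff dquat_eq_iff one_dquat_def zero_dquat_def)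

lemma dual_mat_mat2:
  "dual_mat (mat2 p q r s) (mat2 p' q' r' s') = mat2 (DQ p p') (DQ q q') (DQ r r') (DQ s s')"
  by (subst mat2_expand) (simp add: dual_mat_def)

lemma dq_hermitian_inf_mat:
  assumes "dq_hermitian Q"
  shows "qct (inf_mat Q) = inf_mat Q"
proof -
  have "dual_mat (qct (st_mat Q)) (qct (inf_mat Q)) = dual_mat (st_mat Q) (inf_mat Q)"
    using assms by (simp add: dq_hermitian_def dual_mat_st_inf flip: dct_dual_mat)
  then show ?thesis
    by (simp add: dual_mat_eq_iff)
qed

lemma dual_mat_congruence:
  fixes U E A B :: "quat ^ 'n ^ 'n"
  defines "V \<equiv> dual_mat (mat 1) E" and "L \<equiv> qct U ** A ** U"
  shows "dct V ** dct (dq_mat U) ** dual_mat A B ** dq_mat U ** V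
           = dual_mat L (qct U ** B ** U + qct E ** L + L ** E)"
  by (simp add: V_def L_def dct_dual_mat dq_mat_eq_dual_mat dual_mat_mult
      matrix_add_ldistrib matrix_add_rdistrib matrix_mul_assoc add_ac)

lemma dq_unitary_dual_perturbation:
  assumes "q_unitary U" and "qct E = - E"
  shows "dq_unitary (dq_mat U ** dual_mat (mat 1) E)"
proof -
  have U: "qct U ** U = mat 1" "U ** qct U = mat 1"
    using assms(1) by (simp_all add: q_unitary_def)
  define X where "X = dq_mat U ** dual_mat (mat 1) E"
  have X: "X = dual_mat U (U ** E)"
    by (simp add: X_def dq_mat_eq_dual_mat dual_mat_mult)
  then have dct_X: "dct X = dual_mat (qct U) (- (E ** qct U))"
    by (simp add: dct_dual_mat qct_mult assms(2))
  have "qct U ** (U ** E) = E" "E ** qct U ** U = E"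
    by (simp_all add: U matrix_mul_assoc flip: matrix_mul_assoc[of E])
  then have "dct X ** X = mat 1"
    unfolding dct_X unfolding X by (simp add: dual_mat_mult U dual_mat_one)
  moreover have "X ** dct X = mat 1"
    unfolding dct_X unfolding X by (simp add: dual_mat_mult U dual_mat_one matrix_mul_assoc)
  ultimately show ?thesis
    by (simp add: dq_unitary_def X_def)
qed

definition sylvester_mat2 :: "real \<Rightarrow> real \<Rightarrow> quat \<Rightarrow> quat ^ 2 ^ 2" where
  "sylvester_mat2 l1 l2 z = mat2 0 ((1 / (l2 - l1)) *\<^sub>R z) ((1 / (l1 - l2)) *\<^sub>R qcnj z) 0"

lemma qct_sylvester_mat2: "qct (sylvester_mat2 l1 l2 z) = - sylvester_mat2 l1 l2 z"
proof -
  have "1 / (l1 - l2) = - (1 / (l2 - l1))"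
    by (simp add: divide_simps)
  then show ?thesis
    by (simp add: sylvester_mat2_def qct_mat2 mat2_uminus)
qed

lemma sylvester_mat2_solves:
  fixes l1 l2 :: real and x y z :: quat
  assumes "l1 \<noteq> l2"
  defines "E \<equiv> sylvester_mat2 l1 l2 z" and "L \<equiv> mat2 (of_real l1) 0 0 (of_real l2)"
  shows "mat2 x z (qcnj z) y + qct E ** L + L ** E = mat2 x 0 0 y"
proof -
  have "l1 / (l2 - l1) = - (l1 / (l1 - l2))"
    by (metis minus_diff_eq minus_divide_right)
  then have "l2 / (l1 - l2) + l1 / (l2 - l1) = - 1"
    using assms(1) by (simp add: divide_eq_minus_1_iff flip: diff_divide_distrib)
  then have "w + (l2 / (l1 - l2)) *\<^sub>R w + (l1 / (l2 - l1)) *\<^sub>R w = 0"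
    and "w + (l1 / (l2 - l1)) *\<^sub>R w + (l2 / (l1 - l2)) *\<^sub>R w = 0" for w :: quat
    by (simp_all add: add.assoc add.commute[of "l1 / (l2 - l1)"] flip: scaleR_add_left)
  then show ?thesis
    unfolding E_def L_def sylvester_mat2_def
    by (simp add: qct_mat2 mat2_mult mat2_add mat2_eq_iff mult_of_real_right
        flip: scaleR_conv_of_real)
qed

lemma dual_mat_one_sylvester_mat2:
  "dual_mat (mat 1) (sylvester_mat2 l1 l2 z)
     = mat2 1 (DQ 0 ((1 / (l2 - l1)) *\<^sub>R z)) (DQ 0 ((1 / (l1 - l2)) *\<^sub>R qcnj z)) 1"
  by (simp add: sylvester_mat2_def mat_one_mat2 dual_mat_mat2 one_dquat_def)

lemma dn_diagonal_mat2:
  assumes "x \<in> range of_real" "y \<in> range of_real"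
  shows "dn_diagonal (mat2 (DQ (of_real l1) x) 0 0 (DQ (of_real l2) y))"
  using assms by (auto simp: dn_diagonal_def dual_number_def mat2_def forall_2 zero_dquat_def)

theorem proposition3p4:
  fixes Q :: "dquat ^ 2 ^ 2" and a b l1 l2 :: real and c :: quat
  assumes herm: "dq_hermitian Q"
    and st: "st_mat Q = mat2 (of_real a) c (qcnj c) (of_real b)"
    and c0: "c \<noteq> 0"
    and l12: "l1 \<noteq> l2"
    and root1: "of_real ((a - l1) * (b - l1)) = qcnj c * c"
    and root2: "of_real ((a - l2) * (b - l2)) = qcnj c * c"
  defines "s1 \<equiv> sqrt ((a - l1)\<^sup>2 + Re (qcnj c * c))"
    and "s2 \<equiv> sqrt ((a - l2)\<^sup>2 + Re (qcnj c * c))"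
  defines "U \<equiv> mat2 ((1 / s1) *\<^sub>R (- c)) ((1 / s2) *\<^sub>R (- c))
                    (of_real ((a - l1) / s1)) (of_real ((a - l2) / s2))"
  defines "W \<equiv> qct U ** inf_mat Q ** U"
  defines "x \<equiv> W $ 1 $ 1" and "z \<equiv> W $ 1 $ 2" and "y \<equiv> W $ 2 $ 2"
  defines "V \<equiv> mat2 1 (DQ 0 ((1 / (l2 - l1)) *\<^sub>R z))
                    (DQ 0 ((1 / (l1 - l2)) *\<^sub>R qcnj z)) 1"
  shows "q_unitary U
    \<and> qct U ** st_mat Q ** U = mat2 (of_real l1) 0 0 (of_real l2)
    \<and> W = mat2 x z (qcnj z) y
    \<and> dct V ** dct (dq_mat U) ** dct Q ** dq_mat U ** V
           = mat2 (DQ (of_real l1) x) 0 0 (DQ (of_real l2) y)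
    \<and> dn_diagonal (dct V ** dct (dq_mat U) ** dct Q ** dq_mat U ** V)
    \<and> dq_unitary (dq_mat U ** V)"
proof -
  have "(a - l1) * (b - l1) = Re (qcnj c * c)" "(a - l2) * (b - l2) = Re (qcnj c * c)"
    using arg_cong[OF root1, of Re] arg_cong[OF root2, of Re] by (simp_all only: Re_of_real)
  note U = quat_hermitian_mat2_diagonalization[OF c0 l12 this,
      folded s1_def s2_def, folded U_def st]
  have "qct W = W"
    using dq_hermitian_inf_mat[OF herm] by (simp add: W_def qct_mult matrix_mul_assoc)
  note W = qct_eq_self_mat2[OF this, folded x_def z_def y_def]
  define E where "E = sylvester_mat2 l1 l2 z"
  have V: "V = dual_mat (mat 1) E"
    by (simp add: V_def E_def dual_mat_one_sylvester_mat2)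
  let ?L = "mat2 (of_real l1) 0 0 (of_real l2)"
  have "dct V ** dct (dq_mat U) ** dct Q ** dq_mat U ** V
      = dual_mat ?L (W + qct E ** ?L + ?L ** E)"
    using dual_mat_congruence[of E U "st_mat Q" "inf_mat Q"] herm[unfolded dq_hermitian_def]
    by (simp add: V U(2) dual_mat_st_inf flip: W_def)
  also have "\<dots> = mat2 (DQ (of_real l1) x) 0 0 (DQ (of_real l2) y)"
    using sylvester_mat2_solves[OF l12, where x = x and y = y and z = z] W(1)
    by (simp add: E_def dual_mat_mat2 zero_dquat_def)
  finally have diag: "dct V ** dct (dq_mat U) ** dct Q ** dq_mat U ** V
      = mat2 (DQ (of_real l1) x) 0 0 (DQ (of_real l2) y)" .
  have "dq_unitary (dq_mat U ** V)"
    unfolding V E_def by (rule dq_unitary_dual_perturbation[OF U(1) qct_sylvester_mat2])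
  then show ?thesis
    unfolding diag by (intro conjI refl U W(1) dn_diagonal_mat2[OF W(2,3)])
qed

end
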